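(* Let $n$ be an odd positive integer and let $h\ge 2$ be an integer. Then there exists a $(2n+1)\times(2n+1)$ matrix $B$, all of whose entries lie in $\{0,1,\ldots,h\}$, which has two distinct real eigenvalues $\lambda\neq\mu$ with $|\lambda-\mu|\le h^{-\frac{(n+3)(n-3)}{4}}$. Moreover, $\lambda$ and $\mu$ are both roots of a single factor of the characteristic polynomial $\chi(B)$ which is irreducible over $\mathbb{Z}$ and has degree $n+1$.
   Context: $\chi(B)=\det(tI-B)$ denotes the characteristic polynomial of $B$, a monic polynomial with integer coefficients. *)

theory Defs
  imports Jordan_Normal_Form.Char_Poly "HOL-Computational_Algebra.Polynomial_Factorial"
begin

end

theory Submission
  imports Defs
begin

text \<open>
  Write \<open>n = 2m + 3\<close> with \<open>m \<ge> 1\<close> and \<open>a = h^m\<close>. The polynomial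
  \<open>P = X^(2m+4) - 12 (1 + a X)^2\<close> is Eisenstein at 3, and it has two real roots within
  \<open>a^-(m+3) = h^-(m(m+3))\<close> of \<open>-1/a\<close>: there \<open>1 + a X\<close> vanishes and \<open>P > 0\<close>, while the tiny
  term \<open>X^(2m+4)\<close> is already beaten by \<open>12 (1 + a X)^2\<close> at distance \<open>a^-(m+3)/2\<close>.
  Every nonzero root of \<open>P\<close> is an eigenvalue of the weighted adjacency matrix, with weights in
  \<open>{1, 2, h}\<close>, of a digraph on \<open>4m + 7\<close> nodes: a cycle through two copies of a gadget made of
  two parallel paths (\<open>m\<close> edges of weight \<open>h\<close>, \<open>m + 1\<close> edges of weight 1) and through three
  parallel paths of two edges of weight 2; the eigenvector is written down explicitly.
  An irreducible integer polynomial sharing a root with \<open>\<chi>(B)\<close> divides it.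
  For \<open>n = 1\<close> and \<open>n = 3\<close> fixed small matrices suffice.
\<close>

section \<open>Eisenstein's criterion\<close>

lemma prime_dvd_coeff_left_factor:
  fixes a b :: "'a::factorial_ring_gcd poly"
  assumes p: "prime p" and b0: "\<not> p dvd coeff b 0"
    and ab: "\<And>j. j \<le> i \<Longrightarrow> p dvd coeff (a * b) j"
  shows "p dvd coeff a i"
  using ab
proof (induction i rule: less_induct)
  case (less i)
  have "p dvd coeff a j" if "j < i" for j
    using less.IH[of j] less.prems that by simp
  then have lower: "p dvd (\<Sum>j<i. coeff a j * coeff b (i - j))"
    by (intro dvd_sum dvd_mult2) simp
  have "coeff (a * b) i = (\<Sum>j<i. coeff a j * coeff b (i - j)) + coeff a i * coeff b 0"
    by (simp add: coeff_mult lessThan_Suc_atMost[symmetric])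
  moreover have "p dvd coeff (a * b) i"
    using less.prems by simp
  ultimately have "p dvd coeff a i * coeff b 0"
    using dvd_add_right_iff[OF lower] by simp
  then show ?case
    using p b0 prime_dvd_mult_iff by blast
qed

lemma eisenstein_irreducible:
  fixes f :: "'a::factorial_ring_gcd poly"
  assumes p: "prime p" and content: "content f = 1" and deg: "degree f \<noteq> 0"
    and lead: "\<not> p dvd lead_coeff f"
    and low: "\<And>i. i < degree f \<Longrightarrow> p dvd coeff f i"
    and const: "\<not> p^2 dvd coeff f 0"
  shows "irreducible f"
proof (rule irreducibleI)
  show f0: "f \<noteq> 0"
    using deg by auto
  show "\<not> is_unit f"
    using deg by (auto simp: is_unit_poly_iff)
  have nonconstant: "degree a \<noteq> 0" if ab: "f = a * b" and a: "\<not> is_unit a" for a b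
  proof
    assume "degree a = 0"
    then have a_const: "a = [:coeff a 0:]"
      by (rule degree_0_id[symmetric])
    then have "[:coeff a 0:] dvd f"
      using ab by (metis dvd_triv_left)
    then have "is_unit (coeff a 0)"
      using content by (simp add: const_poly_dvd_iff_dvd_content)
    then show False
      using a a_const is_unit_const_poly_iff by metis
  qed
  have no_split: False
    if ab: "f = a * b" and a0: "p dvd coeff a 0" and units: "\<not> is_unit a" "\<not> is_unit b" for a b
  proof -
    have "degree f = degree a + degree b"
      using ab f0 by (simp add: degree_mult_eq)
    moreover have "degree b \<noteq> 0"
      using nonconstant[of b a] ab units(2) by (simp add: mult.commute)
    ultimately have deg_a: "degree a < degree f"
      by simp
    have b0: "\<not> p dvd coeff b 0"
    proof
      assume "p dvd coeff b 0"
      then have "p * p dvd coeff a 0 * coeff b 0"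
        using a0 by (rule mult_dvd_mono[rotated])
      then show False
        using const ab by (simp add: coeff_mult power2_eq_square)
    qed
    have "p dvd lead_coeff a"
      using prime_dvd_coeff_left_factor[OF p b0, of "degree a" a] low deg_a ab by simp
    then show False
      using lead ab by (simp add: lead_coeff_mult)
  qed
  fix a b
  assume ab: "f = a * b"
  have "p dvd coeff a 0 * coeff b 0"
    using ab low[of 0] deg by (simp add: coeff_mult)
  then have "p dvd coeff a 0 \<or> p dvd coeff b 0"
    using p prime_dvd_mult_iff by blast
  then show "is_unit a \<or> is_unit b"
    using no_split[of a b] no_split[of b a] ab by (auto simp: mult.commute)
qed

corollary eisenstein_irreducible_monic:
  fixes f :: "'a::factorial_ring_gcd poly"
  assumes "prime p" and monic: "lead_coeff f = 1" and "degree f \<noteq> 0"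
    and "\<And>i. i < degree f \<Longrightarrow> p dvd coeff f i" and "\<not> p^2 dvd coeff f 0"
  shows "irreducible f"
proof (rule eisenstein_irreducible[OF \<open>prime p\<close>])
  show "content f = 1"
    using content_dvd_coeff[of f "degree f"] monic by simp
  show "\<not> p dvd lead_coeff f"
    using \<open>prime p\<close> monic by (simp add: prime_elem_not_unit)
qed (use assms in auto)

section \<open>Irreducible factors of characteristic polynomials\<close>

lemma pseudo_remainder_root:
  fixes f u q r :: "int poly" and x :: "'a::field_char_0"
  assumes "Polynomial.smult a f = u * q + r" "a \<noteq> 0"
    "poly (of_int_poly f) x = 0" "poly (of_int_poly u) x = 0"
  shows "poly (of_int_poly r) x = 0"
proof -
  have "poly (of_int_poly (Polynomial.smult a f)) x = poly (of_int_poly (u * q + r)) x"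
    using assms(1) by simp
  then show ?thesis
    using assms(3,4) by (simp add: hom_distribs)
qed

lemma irreducible_root_degree_le:
  fixes f u :: "int poly" and x :: "'a::field_char_0"
  assumes irr: "irreducible f" and f_root: "poly (of_int_poly f) x = 0"
    and "u \<noteq> 0" and "poly (of_int_poly u) x = 0"
  shows "degree f \<le> degree u"
  using assms(3,4)
proof (induction "degree u" arbitrary: u rule: less_induct)
  case less
  let ?r = "pseudo_mod f u"
  obtain a q where a: "a \<noteq> 0" and div: "Polynomial.smult a f = u * q + ?r"
    using pseudo_mod(1)[OF less.prems(1)] by blast
  have r_root: "poly (of_int_poly ?r) x = 0"
    by (rule pseudo_remainder_root[OF div a]) (use f_root less.prems in auto)
  show ?case
  proof (cases "?r = 0")
    case False
    then have deg_r: "degree ?r < degree u"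
      using pseudo_mod(2)[OF less.prems(1)] by blast
    then show ?thesis
      using less.hyps[OF deg_r False r_root] by simp
  next
    case True
    have "f dvd u * q"
      using div True by (metis add_0_right dvd_refl dvd_smult)
    then have "f dvd u \<or> f dvd q"
      using irreducible_imp_prime_poly[OF irr] prime_elem_dvd_mult_iff by blast
    then show ?thesis
    proof
      assume "f dvd u"
      then show ?thesis
        using less.prems(1) by (rule dvd_imp_degree_le)
    next
      assume "f dvd q"
      have "q \<noteq> 0"
        using div True a irr by (metis add_0_right mult_zero_right not_irreducible_zero smult_eq_0_iff)
      have "degree f = degree (u * q)"
        using div True a by (metis add_0_right degree_smult_eq)
      also have "\<dots> = degree u + degree q"
        using less.prems(1) \<open>q \<noteq> 0\<close> by (rule degree_mult_eq)
      finally have "degree f = degree u + degree q" .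
      moreover have "degree f \<le> degree q"
        using \<open>f dvd q\<close> \<open>q \<noteq> 0\<close> by (rule dvd_imp_degree_le)
      ultimately have "degree u = 0"
        by simp
      then obtain c where "u = [:c:]"
        by (metis degree_0_id)
      then show ?thesis
        using less.prems by simp
    qed
  qed
qed

lemma irreducible_dvd_of_common_root:
  fixes f g :: "int poly" and x :: "'a::field_char_0"
  assumes irr: "irreducible f" and f_root: "poly (of_int_poly f) x = 0"
    and g_root: "poly (of_int_poly g) x = 0"
  shows "f dvd g"
proof -
  have "f \<noteq> 0"
    using irr by auto
  let ?r = "pseudo_mod g f"
  obtain a q where a: "a \<noteq> 0" and div: "Polynomial.smult a g = f * q + ?r"
    using pseudo_mod(1)[OF \<open>f \<noteq> 0\<close>] by blast
  have "poly (of_int_poly ?r) x = 0"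
    by (rule pseudo_remainder_root[OF div a g_root f_root])
  moreover have "?r = 0 \<or> degree ?r < degree f"
    using pseudo_mod(2)[OF \<open>f \<noteq> 0\<close>] by blast
  ultimately have "?r = 0"
    using irreducible_root_degree_le[OF irr f_root, of ?r] by linarith
  then have "f dvd [:a:] * g"
    using div by simp
  then have "f dvd [:a:] \<or> f dvd g"
    using irreducible_imp_prime_poly[OF irr] prime_elem_dvd_mult_iff by blast
  moreover have "\<not> f dvd [:a:]"
  proof
    assume "f dvd [:a:]"
    then have "degree f = 0"
      using a dvd_imp_degree_le[of f "[:a:]"] by simp
    then obtain c where "f = [:c:]"
      by (metis degree_0_id)
    then show False
      using f_root \<open>f \<noteq> 0\<close> by simp
  qed
  ultimately show ?thesis
    by blast
qed

lemma eigenvalue_if_row_equations: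
  fixes A :: "'a::comm_ring_1 mat" and v :: "nat \<Rightarrow> 'a"
  assumes A: "A \<in> carrier_mat N N"
    and rows: "\<And>i. i < N \<Longrightarrow> (\<Sum>j<N. A $$ (i, j) * v j) = x * v i"
    and nonzero: "k < N" "v k \<noteq> 0"
  shows "eigenvalue A x"
  unfolding eigenvalue_def eigenvector_def
proof (intro exI conjI)
  show "vec N v \<in> carrier_vec (dim_row A)"
    using A by simp
  show "vec N v \<noteq> 0\<^sub>v (dim_row A)"
    using A nonzero by (metis carrier_matD(1) index_vec index_zero_vec(1))
  show "A *\<^sub>v vec N v = x \<cdot>\<^sub>v vec N v"
  proof (rule eq_vecI)
    fix i
    assume "i < dim_vec (x \<cdot>\<^sub>v vec N v)"
    then have i: "i < N"
      by simp
    have "(A *\<^sub>v vec N v) $ i = (\<Sum>j<N. A $$ (i, j) * v j)"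
      using A i by (simp add: scalar_prod_def atLeast0LessThan)
    then show "(A *\<^sub>v vec N v) $ i = (x \<cdot>\<^sub>v vec N v) $ i"
      using rows[OF i] i by simp
  qed (use A in simp)
qed

lemma dvd_char_poly_if_eigenvalue_root:
  fixes B :: "int mat" and x :: "'a::field_char_0"
  assumes B: "B \<in> carrier_mat N N" and irr: "irreducible f"
    and eigen: "eigenvalue (map_mat of_int B) x" and root: "poly (of_int_poly f) x = 0"
  shows "f dvd char_poly B"
proof -
  have "map_mat of_int B \<in> carrier_mat N N"
    using B by simp
  then have "poly (char_poly (map_mat of_int B)) x = 0"
    using eigen eigenvalue_root_char_poly by blast
  then have "poly (of_int_poly (char_poly B)) x = 0"
    by (simp add: of_int_hom.char_poly_hom[OF B])
  then show ?thesis
    by (rule irreducible_dvd_of_common_root[OF irr root])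
qed

section \<open>Close conjugate eigenvalues\<close>

definition has_close_eigenvalues :: "nat \<Rightarrow> int \<Rightarrow> nat \<Rightarrow> real \<Rightarrow> bool" where
  "has_close_eigenvalues N h d \<delta> \<longleftrightarrow>
    (\<exists>B :: int mat. B \<in> carrier_mat N N \<and> (\<forall>i < N. \<forall>j < N. B $$ (i,j) \<in> {0..h}) \<and>
      (\<exists>l m :: real. l \<noteq> m \<and>
        eigenvalue (map_mat real_of_int B) l \<and> eigenvalue (map_mat real_of_int B) m \<and>
        \<bar>l - m\<bar> \<le> \<delta> \<and>
        (\<exists>f :: int poly. f dvd char_poly B \<and> irreducible f \<and> degree f = d \<and>
           poly (of_int_poly f) l = 0 \<and> poly (of_int_poly f) m = 0)))"

lemma has_close_eigenvaluesI:
  fixes B :: "int mat" and f :: "int poly" and l m :: real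
  assumes "B \<in> carrier_mat N N" and "\<And>i j. i < N \<Longrightarrow> j < N \<Longrightarrow> B $$ (i,j) \<in> {0..h}"
    and "irreducible f" and "degree f = d"
    and "eigenvalue (map_mat real_of_int B) l" and "poly (of_int_poly f) l = 0"
    and "eigenvalue (map_mat real_of_int B) m" and "poly (of_int_poly f) m = 0"
    and "l \<noteq> m" and "\<bar>l - m\<bar> \<le> \<delta>"
  shows "has_close_eigenvalues N h d \<delta>"
  unfolding has_close_eigenvalues_def
  using assms dvd_char_poly_if_eigenvalue_root[OF assms(1,3,5,6)]
  by (intro exI[of _ B] conjI exI[of _ l] exI[of _ m] exI[of _ f]) auto

definition matrix_size_3 :: "int mat" where
  "matrix_size_3 = mat_of_rows_list 3 [[0, 2, 0], [1, 0, 0], [0, 0, 0]]"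

lemma close_eigenvalues_size_3:
  assumes "h \<ge> 2"
  shows "has_close_eigenvalues 3 h 2 (real_of_int h ^ 2)"
proof -
  define f :: "int poly" where "f = [:-2, 0, 1:]"
  have f_poly: "poly (of_int_poly f) x = x^2 - 2" for x :: real
    by (simp add: f_def power2_eq_square)
  have "irreducible f"
  proof (rule eisenstein_irreducible_monic[of 2])
    show "2 dvd coeff f i" if "i < degree f" for i
      using that by (auto simp: f_def numeral_eq_Suc less_Suc_eq)
  qed (simp_all add: f_def)
  have eigen: "eigenvalue (map_mat real_of_int matrix_size_3) x" if "x^2 = 2" for x :: real
  proof (rule eigenvalue_if_row_equations[where v = "\<lambda>j. [x, 1, 0] ! j" and k = 1 and N = 3])
    show "map_mat real_of_int matrix_size_3 \<in> carrier_mat 3 3"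
      by (simp add: matrix_size_3_def mat_of_rows_list_def numeral_eq_Suc)
    fix i :: nat
    assume "i < 3"
    then consider "i = 0" | "i = 1" | "i = 2"
      by linarith
    then show "(\<Sum>j<3. map_mat real_of_int matrix_size_3 $$ (i, j) * [x, 1, 0] ! j) = x * [x, 1, 0] ! i"
      by cases (use that in \<open>simp_all add: matrix_size_3_def mat_of_rows_list_def numeral_eq_Suc power2_eq_square\<close>)
  qed simp_all
  have "degree f = 2"
    by (simp add: f_def)
  have "\<bar>sqrt 2 - - sqrt 2\<bar> \<le> (2::real)^2"
    using real_sqrt_le_mono[of 2 4] by (simp add: real_sqrt_four)
  also have "\<dots> \<le> real_of_int h ^ 2"
    using assms by (intro power_mono) auto
  finally show ?thesis
    using \<open>irreducible f\<close> \<open>degree f = 2\<close> assms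
    by (intro has_close_eigenvaluesI[of matrix_size_3 _ _ f _ "sqrt 2" "- sqrt 2"] eigen)
      (auto simp: matrix_size_3_def mat_of_rows_list_def f_poly numeral_eq_Suc less_Suc_eq)
qed

definition matrix_size_7 :: "int mat" where
  "matrix_size_7 = mat_of_rows_list 7
    [[0, 2, 2, 2, 0, 1, 0],
     [2, 0, 0, 0, 0, 0, 0],
     [2, 0, 0, 0, 0, 0, 0],
     [0, 2, 0, 0, 0, 0, 0],
     [0, 1, 0, 0, 0, 0, 0],
     [0, 0, 0, 0, 1, 0, 0],
     [0, 0, 0, 0, 0, 0, 0]]"

lemma close_eigenvalues_size_7:
  assumes "h \<ge> 2"
  shows "has_close_eigenvalues 7 h 4 1"
proof -
  define f :: "int poly" where "f = [:-2, -8, -8, 0, 1:]"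
  have f_poly: "poly (of_int_poly f) x = x^4 - 8*x^2 - 8*x - 2" for x :: real
    by (simp add: f_def eval_nat_numeral algebra_simps)
  have "irreducible f"
  proof (rule eisenstein_irreducible_monic[of 2])
    show "2 dvd coeff f i" if "i < degree f" for i
      using that by (auto simp: f_def numeral_eq_Suc less_Suc_eq)
  qed (simp_all add: f_def)
  have eigen: "eigenvalue (map_mat real_of_int matrix_size_7) x" if "poly (of_int_poly f) x = 0" for x :: real
  proof (rule eigenvalue_if_row_equations[where k = 5 and N = 7])
    show "map_mat real_of_int matrix_size_7 \<in> carrier_mat 7 7"
      by (simp add: matrix_size_7_def mat_of_rows_list_def numeral_eq_Suc)
    let ?v = "\<lambda>j. [x^3, 2*x^2, 2*x^2, 4*x, 2*x, 2, 0] ! j"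
    fix i :: nat
    assume "i < 7"
    then consider "i = 0" | "i = 1" | "i = 2" | "i = 3" | "i = 4" | "i = 5" | "i = 6"
      by linarith
    then show "(\<Sum>j<7. map_mat real_of_int matrix_size_7 $$ (i, j) * ?v j) = x * ?v i"
      by cases (use that in \<open>simp_all add: f_poly matrix_size_7_def mat_of_rows_list_def
          numeral_eq_Suc power2_eq_square power3_eq_cube algebra_simps\<close>)
  qed simp_all
  have "poly (of_int_poly f) (-7/10) < (0::real)" "poly (of_int_poly f) (-1/2) > (0::real)"
    "poly (of_int_poly f) (-3/10) < (0::real)"
    by (simp_all add: f_poly eval_nat_numeral)
  then obtain l r :: real where "-7/10 < l" "l < -1/2" "poly (of_int_poly f) l = 0"
    and "-1/2 < r" "r < -3/10" "poly (of_int_poly f) r = 0"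
    using poly_IVT_pos[of "-7/10" "-1/2" "of_int_poly f"] poly_IVT_neg[of "-1/2" "-3/10" "of_int_poly f"]
    by auto
  moreover have "degree f = 4"
    by (simp add: f_def)
  ultimately show ?thesis
    using \<open>irreducible f\<close> assms
    by (intro has_close_eigenvaluesI[of matrix_size_7 _ _ f _ l r] eigen)
      (auto simp: matrix_size_7_def mat_of_rows_list_def numeral_eq_Suc less_Suc_eq)
qed

section \<open>Two close roots of \<open>X^(2k) - 12 (1 + a X)^2\<close>\<close>

lemma power_one_plus_half_inverse_less_3:
  fixes a :: real
  assumes "a \<ge> 2"
  shows "(1 + 1 / (2 * a^k))^(2*k) < 3"
proof -
  have a_pow: "a^k > 0"
    using assms by simp
  have "real k < 2^k"
    using less_exp[of k] by (metis of_nat_less_iff of_nat_numeral of_nat_power)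
  also have "\<dots> \<le> a^k"
    using assms by (intro power_mono) auto
  finally have k_less: "real k < a^k" .
  have "(1 + 1 / (2 * a^k))^(2*k) \<le> exp (1 / (2 * a^k))^(2*k)"
    using a_pow by (intro power_mono exp_ge_add_one_self) auto
  also have "\<dots> = exp (real k / a^k)"
    using a_pow by (simp add: exp_of_nat_mult[symmetric])
  also have "\<dots> < exp 1"
    using k_less a_pow by simp
  also have "\<dots> \<le> 3"
    by (rule exp_le)
  finally show ?thesis .
qed

lemma close_roots_exist:
  fixes a :: real
  assumes a: "a \<ge> 2"
  shows "\<exists>l r. l \<noteq> r \<and> \<bar>l - r\<bar> \<le> 1 / a^(k+1) \<and>
    l^(2*k) = 12 * (1 + a*l)^2 \<and> r^(2*k) = 12 * (1 + a*r)^2"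
proof -
  define P where "P y = y^(2*k) - 12 * (1 + a*y)^2" for y
  define c where "c = -1 / a"
  define t where "t = 1 / (2 * a^(k+1))"
  have "a > 0"
    using a by simp
  have at: "a * t = 1 / (2 * a^k)"
    using \<open>a > 0\<close> by (simp add: t_def)
  have "1 \<le> a^k"
    using a by (simp add: one_le_power)
  then have t_pos: "0 < t" and t_less: "t < 1 / a"
    using \<open>a > 0\<close> by (auto simp: t_def field_simps)
  have P_center: "P c > 0"
    using \<open>a > 0\<close> by (simp add: P_def c_def zero_less_power_eq)
  have key: "(1/a + t)^(2*k) < 12 * (a*t)^2"
  proof -
    have "1/a + t = (1/a) * (1 + 1 / (2 * a^k))"
      using \<open>a > 0\<close> by (simp add: t_def field_simps)
    then have "(1/a + t)^(2*k) = (1/a)^(2*k) * (1 + 1 / (2 * a^k))^(2*k)"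
      by (simp only: power_mult_distrib)
    also have "\<dots> < (1/a)^(2*k) * 3"
      using power_one_plus_half_inverse_less_3[OF a] \<open>a > 0\<close> by simp
    also have "\<dots> = 12 * (a*t)^2"
      by (simp add: at power_divide mult.commute flip: power_mult)
    finally show ?thesis .
  qed
  have P_left: "P (c - t) < 0"
  proof -
    have "(c - t)^2 = (1/a + t)^2"
      by (simp add: c_def power2_eq_square algebra_simps)
    then have "(c - t)^(2*k) = (1/a + t)^(2*k)"
      by (simp add: power_mult)
    moreover have "1 + a * (c - t) = - (a*t)"
      using \<open>a > 0\<close> by (simp add: c_def right_diff_distrib)
    ultimately show ?thesis
      using key by (simp add: P_def)
  qed
  have P_right: "P (c + t) < 0"
  proof -
    have "(c + t)^2 = (1/a - t)^2"
      by (simp add: c_def power2_eq_square algebra_simps)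
    then have "(c + t)^(2*k) = (1/a - t)^(2*k)"
      by (simp add: power_mult)
    also have "\<dots> \<le> (1/a + t)^(2*k)"
      using t_pos t_less by (intro power_mono) auto
    finally have "(c + t)^(2*k) < 12 * (a*t)^2"
      using key by simp
    moreover have "1 + a * (c + t) = a*t"
      using \<open>a > 0\<close> by (simp add: c_def right_diff_distrib)
    ultimately show ?thesis
      by (simp add: P_def)
  qed
  have cont: "continuous_on S P" for S
    unfolding P_def by (intro continuous_intros)
  obtain l where l: "c - t \<le> l" "l \<le> c" "P l = 0"
    using IVT'[of P "c - t" 0 c, OF _ _ _ cont] P_left P_center t_pos by auto
  obtain r where r: "c \<le> r" "r \<le> c + t" "P r = 0"
    using IVT2'[of P "c + t" 0 c, OF _ _ _ cont] P_right P_center t_pos by auto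
  have "l < c" "c < r"
    using l r P_center by (auto simp: order.order_iff_strict)
  moreover have "2 * t = 1 / a^(k+1)"
    by (simp add: t_def)
  ultimately show ?thesis
    using l r by (intro exI[of _ l] exI[of _ r]) (auto simp: P_def)
qed

definition close_roots_poly :: "nat \<Rightarrow> int \<Rightarrow> int poly" where
  "close_roots_poly k a = monom 1 (2*k) - Polynomial.smult 12 ([:1, a:]^2)"

lemma poly_close_roots_poly:
  "poly (of_int_poly (close_roots_poly k a)) x = x^(2*k) - 12 * (1 + of_int a * x)^2"
  for x :: "'a::comm_ring_1"
  by (simp add: close_roots_poly_def poly_monom hom_distribs mult.commute)

lemma
  assumes "k \<ge> 2"
  shows degree_close_roots_poly: "degree (close_roots_poly k a) = 2*k"
    and irreducible_close_roots_poly: "irreducible (close_roots_poly k a)"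
proof -
  let ?q = "Polynomial.smult 12 ([:1, a:]^2)"
  have "degree ?q \<le> 2"
    using degree_power_le[of "[:1, a:]" 2] by (simp add: degree_pCons_eq_if split: if_splits)
  then have deg_q: "degree ?q < 2*k"
    using assms by linarith
  have coeff_eq: "coeff (close_roots_poly k a) i = (if i = 2*k then 1 else 0) - coeff ?q i" for i
    by (simp add: close_roots_poly_def coeff_monom)
  have "degree (monom 1 (2*k) + - ?q) = 2*k"
    using deg_q by (subst degree_add_eq_left) (simp_all add: degree_monom_eq)
  then show deg: "degree (close_roots_poly k a) = 2*k"
    by (simp add: close_roots_poly_def)
  show "irreducible (close_roots_poly k a)"
  proof (rule eisenstein_irreducible_monic[of 3])
    show "lead_coeff (close_roots_poly k a) = 1"
      using deg_q by (simp add: deg coeff_eq coeff_eq_0)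
    show "3 dvd coeff (close_roots_poly k a) i" if "i < degree (close_roots_poly k a)" for i
      using that by (simp add: deg coeff_eq)
    show "\<not> 3^2 dvd coeff (close_roots_poly k a) 0"
      using assms by (simp add: coeff_eq coeff_0_power)
  qed (use assms in \<open>simp_all add: deg\<close>)
qed

section \<open>The cycle matrix\<close>

lemma sum_row_supported_on:
  fixes F :: "nat \<Rightarrow> 'a::ring_1"
  assumes "S \<subseteq> {..<N}"
  shows "(\<Sum>j<N. of_int (if j \<in> S then w else 0) * F j) = of_int w * sum F S"
proof -
  have "(\<Sum>j<N. of_int (if j \<in> S then w else 0) * F j) = (\<Sum>j<N. if j \<in> S then of_int w * F j else 0)"
    by (rule sum.cong) auto
  also have "\<dots> = (\<Sum>j\<in>{..<N} \<inter> S. of_int w * F j)"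
    by (simp add: sum.inter_restrict)
  also have "{..<N} \<inter> S = S"
    using assms by auto
  finally show ?thesis
    by (simp add: sum_distrib_left)
qed

lemma sum_shift_lower:
  fixes s N :: nat
  assumes "s \<le> N"
  shows "(\<Sum>j<N. if s \<le> j then f (j - s) else 0) = (\<Sum>j<N - s. f j)"
proof -
  have "(\<Sum>j<N - s. f j) = (\<Sum>j\<in>{0 + s..<(N - s) + s}. f (j - s))"
    using sum.shift_bounds_nat_ivl[of "\<lambda>j. f (j - s)" 0 s "N - s"] by (simp add: atLeast0LessThan)
  also have "{0 + s..<(N - s) + s} = {..<N} \<inter> {s..}"
    using assms by auto
  also have "(\<Sum>j\<in>{..<N} \<inter> {s..}. f (j - s)) = (\<Sum>j<N. if j \<in> {s..} then f (j - s) else 0)"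
    by (rule sum.inter_restrict) simp
  finally show ?thesis
    by simp
qed

text \<open>
  Row \<open>i\<close> lists the weights of the edges \<open>j \<rightarrow> i\<close> of two paths from node \<open>0\<close> to node \<open>2m\<close>:
  \<open>0 \<rightarrow> 1 \<rightarrow> \<dots> \<rightarrow> m - 1 \<rightarrow> 2m\<close> with weights \<open>h\<close>, and \<open>0 \<rightarrow> m \<rightarrow> m + 1 \<rightarrow> \<dots> \<rightarrow> 2m\<close> with weights 1.
  With value 1 at node \<open>0\<close>, the eigen-equations for the eigenvalue \<open>1/z\<close> force the values
  \<open>gadget_value\<close>; in particular \<open>z^m (z + h^m)\<close> at node \<open>2m\<close>.
\<close>

definition gadget_entry :: "nat \<Rightarrow> int \<Rightarrow> nat \<Rightarrow> nat \<Rightarrow> int" where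
  "gadget_entry m h i j =
    (if i < m then (if j + 1 = i then h else 0)
     else if i = m then (if j = 0 then 1 else 0)
     else if i < 2*m then (if j + 1 = i then 1 else 0)
     else if i = 2*m then (if j + 1 = m then h else if j + 1 = 2*m then 1 else 0)
     else 0)"

definition gadget_value :: "nat \<Rightarrow> int \<Rightarrow> 'a::field \<Rightarrow> nat \<Rightarrow> 'a" where
  "gadget_value m h z k =
    (if k < m then (of_int h * z)^k
     else if k < 2*m then z^(k - m + 1)
     else z^m * (z + of_int h^m))"

lemma gadget_entry_range: "h \<ge> 2 \<Longrightarrow> gadget_entry m h i j \<in> {0..h}"
  unfolding gadget_entry_def by (auto split: if_split)

lemma gadget_value_0: "1 \<le> m \<Longrightarrow> gadget_value m h z 0 = 1"
  by (simp add: gadget_value_def)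

context
  fixes m :: nat and h :: int and x z :: "'a::field"
  assumes m: "1 \<le> m" and xz: "x * z = 1"
begin

lemma gadget_value_weighted_path:
  assumes "1 \<le> k" "k < m"
  shows "of_int h * gadget_value m h z (k - 1) = x * gadget_value m h z k"
proof -
  obtain l where k: "k = Suc l"
    using assms(1) by (cases k) auto
  have "x * gadget_value m h z k = (x * z) * of_int h * (of_int h * z)^l"
    using assms k by (simp add: gadget_value_def algebra_simps)
  then show ?thesis
    using assms k xz by (simp add: gadget_value_def)
qed

lemma gadget_value_branch: "gadget_value m h z 0 = x * gadget_value m h z m"
  using m xz by (simp add: gadget_value_def)

lemma gadget_value_unit_path:
  assumes "m < k" "k < 2*m"
  shows "gadget_value m h z (k - 1) = x * gadget_value m h z k"
proof -
  have "k - 1 - m + 1 = k - m" "k - m + 1 = Suc (k - m)"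
    using assms by auto
  then have "gadget_value m h z (k - 1) = z^(k - m)" "gadget_value m h z k = z * z^(k - m)"
    using assms by (simp_all add: gadget_value_def)
  then show ?thesis
    using xz by (simp add: mult.assoc[symmetric])
qed

lemma gadget_value_join:
  "of_int h * gadget_value m h z (m - 1) + gadget_value m h z (2*m - 1) = x * gadget_value m h z (2*m)"
proof -
  obtain l where l: "m = Suc l"
    using m by (cases m) auto
  have "x * gadget_value m h z (2*m) = (x * z) * (z * z^l) + (x * z) * (of_int h * (z^l * of_int h^l))"
    using l by (simp add: gadget_value_def algebra_simps power_mult_distrib)
  then show ?thesis
    using l xz by (simp add: gadget_value_def algebra_simps power_mult_distrib)
qed

lemma gadget_row:
  fixes F :: "nat \<Rightarrow> 'a"
  assumes i: "1 \<le> i" "i \<le> 2*m" and N: "2*m \<le> N"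
    and F: "\<And>k. k \<le> 2*m \<Longrightarrow> F k = c * gadget_value m h z k"
  shows "(\<Sum>j<N. of_int (gadget_entry m h i j) * F j) = x * F i"
proof -
  consider "i < m" | "i = m" | "m < i" "i < 2*m" | "i = 2*m"
    using i by linarith
  then show ?thesis
  proof cases
    case 1
    have entry: "gadget_entry m h i j = (if j \<in> {i - 1} then h else 0)" for j
      using 1 i by (auto simp: gadget_entry_def)
    have sub: "{i - 1} \<subseteq> {..<N}"
      using 1 N by auto
    have "(\<Sum>j<N. of_int (gadget_entry m h i j) * F j) = of_int h * F (i - 1)"
      unfolding entry sum_row_supported_on[OF sub] by simp
    also have "\<dots> = c * (of_int h * gadget_value m h z (i - 1))"
      using 1 F by simp
    also have "\<dots> = x * F i"
      using 1 i F gadget_value_weighted_path[of i] by simp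
    finally show ?thesis .
  next
    case 2
    have entry: "gadget_entry m h i j = (if j \<in> {0} then 1 else 0)" for j
      using 2 by (auto simp: gadget_entry_def)
    have sub: "{0} \<subseteq> {..<N}"
      using m N by auto
    have "(\<Sum>j<N. of_int (gadget_entry m h i j) * F j) = F 0"
      unfolding entry sum_row_supported_on[OF sub] by simp
    also have "\<dots> = x * F i"
      using 2 F gadget_value_branch by simp
    finally show ?thesis .
  next
    case 3
    have entry: "gadget_entry m h i j = (if j \<in> {i - 1} then 1 else 0)" for j
      using 3 by (auto simp: gadget_entry_def)
    have sub: "{i - 1} \<subseteq> {..<N}"
      using 3 N by auto
    have "(\<Sum>j<N. of_int (gadget_entry m h i j) * F j) = F (i - 1)"
      unfolding entry sum_row_supported_on[OF sub] by simp
    also have "\<dots> = x * F i"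
      using 3 F gadget_value_unit_path[of i] by simp
    finally show ?thesis .
  next
    case 4
    have entry: "of_int (gadget_entry m h i j) * F j =
        of_int (if j \<in> {m - 1} then h else 0) * F j + of_int (if j \<in> {2*m - 1} then 1 else 0) * F j" for j
      using 4 m by (auto simp: gadget_entry_def)
    have sub: "{m - 1} \<subseteq> {..<N}" "{2*m - 1} \<subseteq> {..<N}"
      using m N by auto
    have "(\<Sum>j<N. of_int (gadget_entry m h i j) * F j) = of_int h * F (m - 1) + F (2*m - 1)"
      unfolding entry sum.distrib sum_row_supported_on[OF sub(1)] sum_row_supported_on[OF sub(2)] by simp
    also have "\<dots> = c * (of_int h * gadget_value m h z (m - 1) + gadget_value m h z (2*m - 1))"
      using F by (simp add: distrib_left)
    also have "\<dots> = x * F i"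
      using 4 F gadget_value_join by simp
    finally show ?thesis .
  qed
qed

end

text \<open>
  Two gadgets in series on the nodes \<open>0..2m\<close> and \<open>2m..4m\<close>, closed into a cycle by the edges
  \<open>4m \<rightarrow> 4m + j \<rightarrow> 0\<close> (\<open>j = 1, 2, 3\<close>) of weight 2; the last three nodes are isolated and only
  pad the size to \<open>4m + 7 = 2n + 1\<close>. Going once around the cycle multiplies by \<open>12 z g^2\<close>, where
  \<open>g\<close> is the value at node \<open>2m\<close>, whence the condition \<open>12 z g^2 = x\<close> in \<open>witness_row\<close>.
\<close>

definition witness_entry :: "nat \<Rightarrow> int \<Rightarrow> nat \<Rightarrow> nat \<Rightarrow> int" where
  "witness_entry m h i j =
    (if i = 0 then (if j \<in> {4*m<..4*m+3} then 2 else 0)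
     else if i \<le> 2*m then gadget_entry m h i j
     else if i \<le> 4*m then (if 2*m \<le> j then gadget_entry m h (i - 2*m) (j - 2*m) else 0)
     else if i \<le> 4*m+3 then (if j \<in> {4*m} then 2 else 0)
     else 0)"

definition witness_matrix :: "nat \<Rightarrow> int \<Rightarrow> int mat" where
  "witness_matrix m h = mat (4*m+7) (4*m+7) (\<lambda>(i, j). witness_entry m h i j)"

definition witness_vector :: "nat \<Rightarrow> int \<Rightarrow> 'a::field \<Rightarrow> nat \<Rightarrow> 'a" where
  "witness_vector m h z i =
    (if i \<le> 2*m then gadget_value m h z i
     else if i \<le> 4*m then gadget_value m h z (2*m) * gadget_value m h z (i - 2*m)
     else if i \<le> 4*m+3 then 2 * z * gadget_value m h z (2*m)^2
     else 0)"

lemma witness_entry_range: "h \<ge> 2 \<Longrightarrow> witness_entry m h i j \<in> {0..h}"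
  using gadget_entry_range unfolding witness_entry_def by (simp split: if_split)

lemma witness_row:
  fixes x z :: "'a::field"
  assumes m: "1 \<le> m" and xz: "x * z = 1"
    and closing: "12 * z * gadget_value m h z (2*m)^2 = x" and i: "i < 4*m+7"
  shows "(\<Sum>j<4*m+7. of_int (witness_entry m h i j) * witness_vector m h z j) = x * witness_vector m h z i"
proof -
  let ?g = "gadget_value m h z (2*m)"
  let ?v = "witness_vector m h z"
  consider "i = 0" | "1 \<le> i" "i \<le> 2*m" | "2*m < i" "i \<le> 4*m" | "4*m < i" "i \<le> 4*m+3" | "4*m+3 < i"
    by linarith
  then show ?thesis
  proof cases
    case 1
    have entry: "witness_entry m h i j = (if j \<in> {4*m<..4*m+3} then 2 else 0)" for j
      using 1 by (simp add: witness_entry_def)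
    have sub: "{4*m<..4*m+3} \<subseteq> {..<4*m+7}"
      by auto
    have "(\<Sum>j<4*m+7. of_int (witness_entry m h i j) * ?v j) = 2 * sum ?v {4*m<..4*m+3}"
      unfolding entry sum_row_supported_on[OF sub] by simp
    also have "sum ?v {4*m<..4*m+3} = 3 * (2 * z * ?g^2)"
      by (simp add: witness_vector_def)
    finally show ?thesis
      using 1 closing m by (simp add: witness_vector_def gadget_value_0[OF m] mult.assoc)
  next
    case 2
    then show ?thesis
      using gadget_row[OF m xz 2, of "4*m+7" ?v 1] by (simp add: witness_entry_def witness_vector_def)
  next
    case 3
    have "(\<Sum>j<4*m+7. of_int (witness_entry m h i j) * ?v j) =
        (\<Sum>j<4*m+7. if 2*m \<le> j then of_int (gadget_entry m h (i - 2*m) (j - 2*m)) * ?v (j - 2*m + 2*m) else 0)"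
      using 3 by (intro sum.cong) (auto simp: witness_entry_def)
    also have "\<dots> = (\<Sum>j<2*m+7. of_int (gadget_entry m h (i - 2*m) j) * ?v (j + 2*m))"
      by (subst sum_shift_lower) auto
    also have "\<dots> = x * ?v (i - 2*m + 2*m)"
      by (rule gadget_row[OF m xz, where c = ?g])
        (use 3 m in \<open>auto simp: witness_vector_def gadget_value_0[OF m]\<close>)
    finally show ?thesis
      using 3 by simp
  next
    case 4
    have entry: "witness_entry m h i j = (if j \<in> {4*m} then 2 else 0)" for j
      using 4 by (simp add: witness_entry_def)
    have sub: "{4*m} \<subseteq> {..<4*m+7}"
      by auto
    have "(\<Sum>j<4*m+7. of_int (witness_entry m h i j) * ?v j) = 2 * ?v (4*m)"
      unfolding entry sum_row_supported_on[OF sub] by simp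
    also have "\<dots> = (x * z) * (2 * ?g^2)"
      using m xz by (simp add: witness_vector_def power2_eq_square)
    also have "\<dots> = x * ?v i"
      using 4 by (simp add: witness_vector_def ac_simps)
    finally show ?thesis .
  next
    case 5
    then show ?thesis
      by (simp add: witness_entry_def witness_vector_def)
  qed
qed

lemma witness_matrix_eigenvalue:
  fixes x :: "'a::field"
  assumes m: "1 \<le> m" and "x \<noteq> 0" and root: "x^(2*m+4) = 12 * (1 + of_int h^m * x)^2"
  shows "eigenvalue (map_mat of_int (witness_matrix m h)) x"
proof -
  define z where "z = inverse x"
  have xz: "x * z = 1"
    using \<open>x \<noteq> 0\<close> by (simp add: z_def)
  let ?u = "1 + of_int h^m * x"
  have "gadget_value m h z (2*m) = z^m * z * ?u"
    using xz by (simp add: gadget_value_def algebra_simps)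
  then have "12 * z * gadget_value m h z (2*m)^2 = z^3 * (z^m)^2 * (12 * ?u^2)"
    by (simp add: power_mult_distrib power2_eq_square power3_eq_cube ac_simps)
  also have "\<dots> = z^3 * (z^m)^2 * ((x^m)^2 * x^4)"
    by (simp add: root[symmetric] power_add power_mult mult.commute[of 2 m])
  also have "\<dots> = (x * z)^3 * (x^m * z^m)^2 * x"
    by (simp add: power_mult_distrib power2_eq_square power3_eq_cube eval_nat_numeral ac_simps)
  also have "\<dots> = x"
    using xz by (simp flip: power_mult_distrib)
  finally have closing: "12 * z * gadget_value m h z (2*m)^2 = x" .
  show ?thesis
    by (rule eigenvalue_if_row_equations[where v = "witness_vector m h z" and k = 0 and N = "4*m+7"])
      (use witness_row[OF m xz closing] m in
        \<open>auto simp: witness_matrix_def witness_vector_def gadget_value_0\<close>)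
qed

lemma close_eigenvalues_general:
  assumes m: "1 \<le> m" and h: "h \<ge> 2"
  shows "has_close_eigenvalues (4*m+7) h (2*m+4) (1 / of_int h^(m*(m+3)))"
proof -
  let ?f = "close_roots_poly (m+2) (h^m)"
  have "(2::real) \<le> of_int h^1"
    using h by simp
  also have "\<dots> \<le> of_int h^m"
    using h m by (intro power_increasing) auto
  finally have a: "(2::real) \<le> of_int h^m" .
  have deg: "2*(m+2) = 2*m+4"
    by simp
  obtain l r :: real where "l \<noteq> r" and dist: "\<bar>l - r\<bar> \<le> 1 / (of_int h^m)^(m+2+1)"
    and roots: "l^(2*(m+2)) = 12 * (1 + of_int h^m * l)^2" "r^(2*(m+2)) = 12 * (1 + of_int h^m * r)^2"
    using close_roots_exist[OF a, of "m+2"] by blast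
  have eigen: "eigenvalue (map_mat real_of_int (witness_matrix m h)) y"
    and root: "poly (of_int_poly ?f) y = 0"
    if y_root: "y^(2*(m+2)) = 12 * (1 + of_int h^m * y)^2" for y :: real
  proof -
    have "y \<noteq> 0"
    proof
      assume "y = 0"
      with y_root show False
        by simp
    qed
    moreover have "y^(2*m+4) = 12 * (1 + of_int h^m * y)^2"
      using y_root by (simp only: deg)
    ultimately show "eigenvalue (map_mat real_of_int (witness_matrix m h)) y"
      by (rule witness_matrix_eigenvalue[OF m])
    show "poly (of_int_poly ?f) y = 0"
      using y_root by (simp add: poly_close_roots_poly)
  qed
  have "m * (m+2+1) = m * (m+3)"
    by (simp add: algebra_simps)
  then have "(of_int h^m)^(m+2+1) = (of_int h^(m*(m+3)) :: real)"
    by (simp only: power_mult[symmetric])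
  with dist have "\<bar>l - r\<bar> \<le> 1 / of_int h^(m*(m+3))"
    by simp
  moreover have "degree ?f = 2*m+4"
    using degree_close_roots_poly[of "m+2" "h^m"] by (simp only: deg)
  moreover have "witness_matrix m h \<in> carrier_mat (4*m+7) (4*m+7)"
    by (simp add: witness_matrix_def)
  moreover have "witness_matrix m h $$ (i, j) \<in> {0..h}" if "i < 4*m+7" "j < 4*m+7" for i j
    using that witness_entry_range[OF h] by (simp add: witness_matrix_def)
  moreover have "irreducible ?f"
    by (rule irreducible_close_roots_poly) simp
  ultimately show ?thesis
    using \<open>l \<noteq> r\<close> eigen[OF roots(1)] root[OF roots(1)] eigen[OF roots(2)] root[OF roots(2)]
    by (intro has_close_eigenvaluesI[of "witness_matrix m h" _ _ ?f]) simp_all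
qed

lemma powr_minus_odd_exponent:
  fixes x :: real
  assumes "x > 0"
  shows "x powr (- ((real (2*m+3) + 3) * (real (2*m+3) - 3) / 4)) = 1 / x^(m * (m+3))"
proof -
  have "(real (2*m+3) + 3) * (real (2*m+3) - 3) / 4 = real (m * (m+3))"
    by (simp add: algebra_simps)
  then show ?thesis
    using assms by (simp only: powr_minus powr_realpow divide_inverse mult_1_left)
qed

theorem mainTheorem1:
  fixes n :: nat and h :: int
  assumes "odd n" and "n > 0" and "h \<ge> 2"
  shows "\<exists>B :: int mat. B \<in> carrier_mat (2*n+1) (2*n+1) \<and>
     (\<forall>i < 2*n+1. \<forall>j < 2*n+1. B $$ (i,j) \<in> {0..h}) \<and>
     (\<exists>l m :: real. l \<noteq> m \<and>
        eigenvalue (map_mat real_of_int B) l \<and> eigenvalue (map_mat real_of_int B) m \<and>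
        \<bar>l - m\<bar> \<le> real_of_int h powr (- ((real n + 3) * (real n - 3) / 4)) \<and>
        (\<exists>f :: int poly. f dvd char_poly B \<and> irreducible f \<and> degree f = n + 1 \<and>
           poly (of_int_poly f) l = 0 \<and> poly (of_int_poly f) m = 0))"
proof -
  have h: "real_of_int h > 0"
    using assms(3) by simp
  have "has_close_eigenvalues (2*n+1) h (n+1) (real_of_int h powr (- ((real n + 3) * (real n - 3) / 4)))"
  proof (cases "n = 1")
    case True
    then have sizes: "2*n+1 = 3" "n+1 = 2"
      and bound: "real_of_int h powr (- ((real n + 3) * (real n - 3) / 4)) = real_of_int h ^ 2"
      using h by (simp_all add: powr_numeral)
    show ?thesis
      unfolding sizes bound by (rule close_eigenvalues_size_3[OF assms(3)])
  next
    case False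
    with assms(1) have "\<exists>m. n = 2*m + 3"
      by presburger
    then obtain m where n: "n = 2*m + 3" ..
    then have sizes: "2*n+1 = 4*m+7" "n+1 = 2*m+4"
      by simp_all
    have bound: "real_of_int h powr (- ((real n + 3) * (real n - 3) / 4)) = 1 / real_of_int h ^ (m * (m+3))"
      unfolding n by (rule powr_minus_odd_exponent[OF h])
    show ?thesis
      unfolding sizes bound
      using close_eigenvalues_size_7[OF assms(3)] close_eigenvalues_general[OF _ assms(3), of m]
      by (cases "m = 0") simp_all
  qed
  then show ?thesis
    unfolding has_close_eigenvalues_def .
qed

end
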